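(* Let $g\ge 1$ be an integer and let $A=\{a_1<\cdots<a_m\}\subset\mathbb N$ be a $\mathcal D[g]$ set. Then $$a_m\ \ge\ \frac1g\binom{m}{\lfloor m/2\rfloor}-1,$$ and hence $\binom{m}{\lfloor m/2\rfloor}\le g(a_m+1)$.
   Context: For a positive integer $g$, a set $\mathcal S=\{a_1<a_2<\cdots\}\subset\mathbb N$ (finite or infinite) is a $\mathcal D[g]$ set if for every $m$ (for which $a_m$ exists) and every $t\in\mathbb Z$, $$\left|\left\{I\subseteq\{1,\dots,m\}:\ \sum_{i\in I}a_i=t\right\}\right|\le g.$$ *)

theory Defs
  imports Complex_Main
begin

text \<open>A finite set {a_1 < ... < a_m} of positive integers is encoded by the sequence
  a :: nat => nat restricted to indices 1..m, strictly increasing there.\<close>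

definition D_set :: "nat \<Rightarrow> (nat \<Rightarrow> nat) \<Rightarrow> nat \<Rightarrow> bool" where
  "D_set g a m \<longleftrightarrow>
     (\<forall>k\<in>{1..m}. \<forall>t::int.
        card {I. I \<subseteq> {1..k} \<and> (\<Sum>i\<in>I. int (a i)) = t} \<le> g)"

end

theory Submission
  imports Defs
begin

text \<open>Erdos's argument for the Littlewood-Offord problem. A subset \<open>I \<subseteq> {1..n}\<close> is identified
  with the sign vector that is \<open>+1\<close> on \<open>I\<close> and \<open>-1\<close> off it, and we count the subsets whose
  signed sum lies in a window. Splitting off the last element, with \<open>M = a (n+1) \<le> w\<close>,
  the number of signed sums in \<open>(-w, w]\<close> equals the number in \<open>(-(w+M), w+M]\<close> plus the
  number in \<open>(-(w-M), w-M]\<close> for the first \<open>n\<close> elements. By induction on \<open>n\<close>, a positive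
  nondecreasing sequence bounded by \<open>M\<close> therefore has at least as many signed sums in
  \<open>(-r M, r M]\<close> as the all-ones sequence has in \<open>(-r, r]\<close>. For \<open>r = 1\<close> and \<open>M = a m\<close> the
  latter number is the central binomial coefficient; the former is at most \<open>g a m\<close>, because
  the signed sums are \<open>2 s - S\<close> for subset sums \<open>s\<close> ranging over \<open>a m\<close> consecutive integers,
  each attained by at most \<open>g\<close> subsets.\<close>

definition sign_sum :: "(nat \<Rightarrow> nat) \<Rightarrow> nat \<Rightarrow> nat set \<Rightarrow> int" where
  "sign_sum a n I = (\<Sum>i\<in>{1..n}. if i \<in> I then int (a i) else - int (a i))"

definition sign_count :: "(nat \<Rightarrow> nat) \<Rightarrow> nat \<Rightarrow> int set \<Rightarrow> nat" where
  "sign_count a n W = card {I \<in> Pow {1..n}. sign_sum a n I \<in> W}"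

lemma sign_count_0: "sign_count a 0 W = (if 0 \<in> W then 1 else 0)"
  by (simp add: sign_count_def sign_sum_def)

lemma sign_sum_eq_subset_sum:
  assumes "I \<subseteq> {1..n}"
  shows "sign_sum a n I = 2 * (\<Sum>i\<in>I. int (a i)) - (\<Sum>i\<in>{1..n}. int (a i))"
proof -
  have "(\<Sum>i\<in>{1..n}. int (a i)) = (\<Sum>i\<in>I. int (a i)) + (\<Sum>i\<in>{1..n} - I. int (a i))"
    using assms by (simp add: sum.subset_diff)
  moreover have "{1..n} \<inter> I = I" using assms by blast
  ultimately show ?thesis
    by (simp add: sign_sum_def sum.If_cases sum_negf Diff_eq[symmetric])
qed

lemma sign_sum_Suc:
  "sign_sum a (Suc n) I = sign_sum a n I + (if Suc n \<in> I then int (a (Suc n)) else - int (a (Suc n)))"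
  by (simp add: sign_sum_def)

lemma sign_sum_insert_Suc: "sign_sum a n (insert (Suc n) J) = sign_sum a n J"
  unfolding sign_sum_def by (intro sum.cong) auto

lemma sign_count_Suc:
  "sign_count a (Suc n) W =
     sign_count a n ((\<lambda>t. t - int (a (Suc n))) -` W) + sign_count a n ((\<lambda>t. t + int (a (Suc n))) -` W)"
proof -
  define M where "M = int (a (Suc n))"
  let ?P = "\<lambda>V. {I \<in> Pow {1..n}. sign_sum a n I \<in> V}"
  have without_Suc: "sign_sum a (Suc n) I = sign_sum a n I - M" if "I \<in> Pow {1..n}" for I
    using that by (auto simp: sign_sum_Suc M_def)
  have with_Suc: "sign_sum a (Suc n) (insert (Suc n) J) = sign_sum a n J + M" for J
    by (simp add: sign_sum_Suc sign_sum_insert_Suc M_def)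
  have "{I \<in> Pow {1..Suc n}. sign_sum a (Suc n) I \<in> W} =
        {I \<in> Pow {1..n}. sign_sum a (Suc n) I \<in> W} \<union>
        {I \<in> insert (Suc n) ` Pow {1..n}. sign_sum a (Suc n) I \<in> W}"
    by (simp only: atLeastAtMostSuc_conv Pow_insert Un_iff conj_disj_distribR Collect_disj_eq)
  also have "{I \<in> Pow {1..n}. sign_sum a (Suc n) I \<in> W} = ?P ((\<lambda>t. t - M) -` W)"
    using without_Suc by auto
  also have "{I \<in> insert (Suc n) ` Pow {1..n}. sign_sum a (Suc n) I \<in> W} =
             insert (Suc n) ` ?P ((\<lambda>t. t + M) -` W)"
    by (simp add: Compr_image_eq with_Suc)
  finally have split: "{I \<in> Pow {1..Suc n}. sign_sum a (Suc n) I \<in> W} =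
    ?P ((\<lambda>t. t - M) -` W) \<union> insert (Suc n) ` ?P ((\<lambda>t. t + M) -` W)" .
  have "inj_on (insert (Suc n)) (Pow {1..n})"
    by (rule inj_onI) (metis PowD atLeastAtMost_iff insert_ident not_less_eq_eq order_refl subsetD)
  then have "card (insert (Suc n) ` ?P ((\<lambda>t. t + M) -` W)) = card (?P ((\<lambda>t. t + M) -` W))"
    by (intro card_image) (auto intro: inj_on_subset)
  moreover have "?P ((\<lambda>t. t - M) -` W) \<inter> insert (Suc n) ` ?P ((\<lambda>t. t + M) -` W) = {}"
    by auto
  ultimately show ?thesis
    unfolding sign_count_def split M_def[symmetric] by (simp add: card_Un_disjoint)
qed

lemma sign_count_mono: "V \<subseteq> W \<Longrightarrow> sign_count a n V \<le> sign_count a n W"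
  unfolding sign_count_def by (rule card_mono) auto

lemma sign_count_interval_split:
  assumes "lo \<le> mid" "mid \<le> hi"
  shows "sign_count a n {lo<..hi} = sign_count a n {lo<..mid} + sign_count a n {mid<..hi}"
proof -
  have "{I \<in> Pow {1..n}. sign_sum a n I \<in> {lo<..hi}} =
        {I \<in> Pow {1..n}. sign_sum a n I \<in> {lo<..mid}} \<union> {I \<in> Pow {1..n}. sign_sum a n I \<in> {mid<..hi}}"
    using assms by auto
  moreover have "{I \<in> Pow {1..n}. sign_sum a n I \<in> {lo<..mid}} \<inter> {I \<in> Pow {1..n}. sign_sum a n I \<in> {mid<..hi}} = {}"
    by auto
  ultimately show ?thesis
    unfolding sign_count_def by (simp add: card_Un_disjoint)
qed

lemma sign_count_centered_Suc:
  assumes "int (a (Suc n)) \<le> w"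
  shows "sign_count a (Suc n) {-w<..w} =
           sign_count a n {-(w + a (Suc n))<..w + a (Suc n)} + sign_count a n {-(w - a (Suc n))<..w - a (Suc n)}"
proof -
  define M where "M = int (a (Suc n))"
  have "(\<lambda>t. t - M) -` {-w<..w} = {-(w - M)<..w + M}" "(\<lambda>t. t + M) -` {-w<..w} = {-(w + M)<..w - M}"
    by auto
  moreover have "M \<ge> 0" by (simp add: M_def)
  ultimately show ?thesis
    using assms sign_count_interval_split[of "-(w - M)" "w - M" "w + M" a n]
      sign_count_interval_split[of "-(w + M)" "-(w - M)" "w - M" a n]
      sign_count_interval_split[of "-(w + M)" "-(w - M)" "w + M" a n]
    unfolding M_def[symmetric] sign_count_Suc[of a n] by simp
qed

lemma sign_count_ones_le:
  assumes "mono_on {1..n} a" "\<forall>i\<in>{1..n}. 0 < a i" "\<forall>i\<in>{1..n}. a i \<le> M" "0 < M"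
  shows "sign_count (\<lambda>_. 1) n {- int r<..int r} \<le> sign_count a n {- (int r * int M)<..int r * int M}"
  using assms
proof (induction n arbitrary: M r)
  case 0
  then show ?case by (simp add: sign_count_0)
next
  case (Suc n)
  show ?case
  proof (cases r)
    case 0
    then show ?thesis by (simp add: sign_count_def)
  next
    case (Suc r')
    define A where "A = a (Suc n)"
    have "0 < A" "A \<le> M" using Suc.prems by (auto simp: A_def)
    have IH: "sign_count (\<lambda>_. 1) n {- int q<..int q} \<le> sign_count a n {- (int q * int A)<..int q * int A}" for q
    proof (rule Suc.IH)
      show "mono_on {1..n} a" using Suc.prems(1) by (rule mono_on_subset) auto
      show "\<forall>i\<in>{1..n}. a i \<le> A"
        using Suc.prems(1) by (auto simp: A_def intro: mono_onD)
    qed (use Suc.prems(2) \<open>0 < A\<close> in auto)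
    have "sign_count (\<lambda>_. 1) (Suc n) {- int r<..int r} =
          sign_count (\<lambda>_. 1) n {- int (r' + 2)<..int (r' + 2)} + sign_count (\<lambda>_. 1) n {- int r'<..int r'}"
      using sign_count_centered_Suc[of "\<lambda>_. 1" n "int r"] by (simp add: \<open>r = Suc r'\<close> add_ac)
    also have "\<dots> \<le> sign_count a n {- (int (r' + 2) * int A)<..int (r' + 2) * int A}
                   + sign_count a n {- (int r' * int A)<..int r' * int A}"
      using IH by (rule add_mono) (rule IH)
    also have "\<dots> = sign_count a (Suc n) {- (int r * int A)<..int r * int A}"
      using sign_count_centered_Suc[of a n "int r * int A"]
      by (simp add: \<open>r = Suc r'\<close> A_def algebra_simps)
    also have "\<dots> \<le> sign_count a (Suc n) {- (int r * int M)<..int r * int M}"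
    proof (rule sign_count_mono)
      have "int r * int A \<le> int r * int M" using \<open>A \<le> M\<close> by (simp add: mult_left_mono)
      then show "{- (int r * int A)<..int r * int A} \<subseteq> {- (int r * int M)<..int r * int M}" by auto
    qed
    finally show ?thesis .
  qed
qed

lemma sign_count_ones_central: "sign_count (\<lambda>_. 1) n {-1<..1} = n choose (n div 2)"
proof -
  have "sign_sum (\<lambda>_. 1) n I = 2 * int (card I) - int n" if "I \<subseteq> {1..n}" for I
    using that by (simp add: sign_sum_eq_subset_sum)
  then have "{I \<in> Pow {1..n}. sign_sum (\<lambda>_. 1) n I \<in> {-1<..1}} =
             {I. I \<subseteq> {1..n} \<and> card I = (n + 1) div 2}"
    by auto
  then have "sign_count (\<lambda>_. 1) n {-1<..1} = n choose ((n + 1) div 2)"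
    by (simp add: sign_count_def n_subsets)
  also have "\<dots> = n choose (n - (n + 1) div 2)" by (rule binomial_symmetric) simp
  also have "n - (n + 1) div 2 = n div 2" by simp
  finally show ?thesis .
qed

lemma sign_count_centered_le:
  assumes "\<forall>t. card {I. I \<subseteq> {1..n} \<and> (\<Sum>i\<in>I. int (a i)) = t} \<le> g"
  shows "sign_count a n {- int w<..int w} \<le> g * w"
proof -
  define S where "S = (\<Sum>i\<in>{1..n}. int (a i))"
  define lo where "lo = (S - int w) div 2"
  define F where "F t = {I. I \<subseteq> {1..n} \<and> (\<Sum>i\<in>I. int (a i)) = t}" for t
  have "{I \<in> Pow {1..n}. sign_sum a n I \<in> {- int w<..int w}} \<subseteq> (\<Union>t\<in>{lo<..lo + int w}. F t)"
  proof
    fix I assume I: "I \<in> {I \<in> Pow {1..n}. sign_sum a n I \<in> {- int w<..int w}}"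
    then have "- int w < 2 * (\<Sum>i\<in>I. int (a i)) - S" "2 * (\<Sum>i\<in>I. int (a i)) - S \<le> int w"
      by (auto simp: sign_sum_eq_subset_sum S_def)
    then have "(\<Sum>i\<in>I. int (a i)) \<in> {lo<..lo + int w}"
      unfolding lo_def by auto
    then show "I \<in> (\<Union>t\<in>{lo<..lo + int w}. F t)" using I by (auto simp: F_def)
  qed
  then have "sign_count a n {- int w<..int w} \<le> card (\<Union>t\<in>{lo<..lo + int w}. F t)"
    unfolding sign_count_def by (rule card_mono[rotated]) (auto simp: F_def)
  also have "\<dots> \<le> (\<Sum>t\<in>{lo<..lo + int w}. card (F t))" by (rule card_UN_le) simp
  also have "\<dots> \<le> w * g" using assms sum_bounded_above[of "{lo<..lo + int w}" "\<lambda>t. card (F t)" g]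
    by (simp add: F_def)
  finally show ?thesis by (simp add: mult.commute)
qed

theorem theorem4:
  fixes g m :: nat and a :: "nat \<Rightarrow> nat"
  assumes "g \<ge> 1" and "m \<ge> 1"
    and "strict_mono_on {1..m} a"
    and "\<forall>i\<in>{1..m}. a i > 0"
    and "D_set g a m"
  shows "real (a m) \<ge> (1 / real g) * real (m choose (m div 2)) - 1
         \<and> (m choose (m div 2)) \<le> g * (a m + 1)"
proof -
  have mono: "mono_on {1..m} a" using assms(3) by (rule strict_mono_on_imp_mono_on)
  have "m choose (m div 2) = sign_count (\<lambda>_. 1) m {- int 1<..int 1}"
    using sign_count_ones_central by simp
  also have "\<dots> \<le> sign_count a m {- (int 1 * int (a m))<..int 1 * int (a m)}"
    using mono assms(2,4) by (intro sign_count_ones_le) (auto intro: mono_onD)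
  also have "\<dots> \<le> g * a m"
    using assms(2,5) sign_count_centered_le[of m a g "a m"] by (simp add: D_set_def)
  finally have bound: "m choose (m div 2) \<le> g * (a m + 1)" by simp
  then have "real (m choose (m div 2)) \<le> real g * (real (a m) + 1)"
    by (metis of_nat_1 of_nat_add of_nat_le_iff of_nat_mult)
  then have "real (m choose (m div 2)) / real g \<le> real (a m) + 1"
    using assms(1) by (simp add: divide_le_eq mult.commute)
  with bound show ?thesis by simp
qed

end
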